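(* Let a target $T$ be fixed at a point $(x_T,y_T)\in\mathbb{R}^2$, and consider a UAV with dynamics $\dot x=V\cos\psi$, $\dot y=V\sin\psi$, $\dot\psi=\omega$, $V>0$ constant. Let $r(t)$ be the distance from the UAV to $T$ and $\theta(t)\in[0,2\pi)$ the bearing angle. Let $r_d>0$ be a desired radius, let $k>\frac{1}{r_d}$, let $r_a=\sqrt{r_d^2-\frac{1}{k^2}}$, and let the control input be $$\omega=\begin{cases} k\left[V\cos\!\left(\pi-\sin^{-1}\!\left(\frac{r_a}{r(t)}\right)\right)-\dot r(t)\right], & r(t)\ge r_a,\\ 0,&\text{otherwise}.\end{cases}$$ Then, for every initial condition, $r(t)\to r_d$ and $\theta(t)\to\frac{\pi}{2}$ as $t\to\infty$.
   Context: The bearing angle $\theta(t)\in[0,2\pi)$ is the angle measured counterclockwise from the vector pointing from the UAV's current position to $T$ to the UAV's current heading $(\cos\psi,\sin\psi)$. In these variables the dynamics read $\dot r=-V\cos\theta$, $\dot\theta=\omega+\frac{V\sin\theta}{r}$. $\sin^{-1}$ is the principal arcsine. *)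

theory Defs
  imports "HOL-Analysis.Analysis"
begin

definition uav_range :: "real \<Rightarrow> real \<Rightarrow> real \<Rightarrow> real \<Rightarrow> real" where
  "uav_range xT yT px py = sqrt ((px - xT)^2 + (py - yT)^2)"

text \<open>Bearing angle in [0, 2 pi): angle measured counterclockwise from the vector
  pointing from the UAV (px, py) to the target (xT, yT) to the heading (cos psi, sin psi).\<close>
definition bearing :: "real \<Rightarrow> real \<Rightarrow> real \<Rightarrow> real \<Rightarrow> real \<Rightarrow> real" where
  "bearing xT yT px py psi =
     (let a = Arg (cis psi / Complex (xT - px) (yT - py)) in
      if a < 0 then a + 2 * pi else a)"

definition control :: "real \<Rightarrow> real \<Rightarrow> real \<Rightarrow> real \<Rightarrow> real \<Rightarrow> real" where
  "control V k rd r rdot =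
     (let ra = sqrt (rd^2 - 1 / k^2) in
      if r \<ge> ra then k * (V * cos (pi - arcsin (ra / r)) - rdot) else 0)"

end

theory Submission
  imports Defs
begin

text \<open>Write \<open>P = r cos \<theta>\<close> and \<open>Q = r sin \<theta>\<close>; then \<open>r' = - V P / r\<close>, \<open>P' = - V - \<omega> Q\<close>,
  \<open>Q' = \<omega> P\<close>, and wherever \<open>r \<ge> ra\<close> the control is \<open>\<omega> = k V (P - W) / r\<close> with
  \<open>W = sqrt (r\<^sup>2 - ra\<^sup>2)\<close>. The UAV first enters the region \<open>r > ra, P < W\<close>: inside the disc
  \<open>r < ra\<close> it flies straight and leaves it heading outwards, and outside the disc \<open>W\<close> would
  otherwise decrease at rate at least \<open>V\<close>. That region is forward invariant because
  \<open>(W - P) e\<^sup>k\<^sup>V\<^sup>t\<close> is nondecreasing in it. There the Lyapunov function \<open>Q - k G(r)\<close>, where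
  \<open>G' = W\<close>, is nondecreasing with derivative \<open>k V P\<^sup>2 / r\<close> and bounded, so Barbalat's lemma
  gives \<open>P \<longrightarrow> 0\<close> and then \<open>P' \<longrightarrow> 0\<close>. Hence \<open>W Q / r \<longrightarrow> 1 / k\<close> and \<open>Q / r \<longrightarrow> 1\<close>,
  i.e. \<open>\<theta> \<longrightarrow> pi / 2\<close> and \<open>r \<longrightarrow> sqrt (ra\<^sup>2 + 1 / k\<^sup>2) = rd\<close>.\<close>

lemma first_crossing_time:
  fixes f :: "real \<Rightarrow> real"
  assumes cont: "continuous_on {a..b} f" and "f a < c" "c \<le> f b" "a \<le> b"
  obtains te where "a < te" "te \<le> b" "f te = c" "\<And>t. a \<le> t \<Longrightarrow> t < te \<Longrightarrow> f t < c"
proof -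
  define Z where "Z = {t \<in> {a..b}. f t = c}"
  obtain s where "a \<le> s" "s \<le> b" "f s = c"
    using IVT'[of f a c b] assms by auto
  then have "Z \<noteq> {}"
    unfolding Z_def by auto
  moreover have "closed Z"
    unfolding Z_def using cont by (rule continuous_closed_preimage_constant) simp
  moreover have "bdd_below Z"
    unfolding Z_def by (rule bdd_belowI[of _ a]) simp
  ultimately have Z: "Inf Z \<in> Z" and lower: "\<And>t. t \<in> Z \<Longrightarrow> Inf Z \<le> t"
    by (simp_all add: closed_contains_Inf cInf_lower)
  have below: "f t < c" if t: "a \<le> t" "t < Inf Z" for t
  proof (rule ccontr)
    assume "\<not> f t < c"
    moreover have "t \<le> b" using t Z unfolding Z_def by simp
    moreover have "continuous_on {a..t} f"
      using \<open>t \<le> b\<close> by (intro continuous_on_subset[OF cont]) auto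
    ultimately obtain s where "a \<le> s" "s \<le> t" "f s = c"
      using IVT'[of f a c t] \<open>f a < c\<close> t(1) by auto
    then have "s \<in> Z" using \<open>t \<le> b\<close> unfolding Z_def by simp
    with lower \<open>s \<le> t\<close> \<open>t < Inf Z\<close> show False by fastforce
  qed
  have "a \<noteq> Inf Z" using Z \<open>f a < c\<close> unfolding Z_def by auto
  with Z below show thesis
    by (intro that) (auto simp: Z_def)
qed

lemma DERIV_bounded_imp_lipschitz_on:
  fixes f :: "real \<Rightarrow> real"
  assumes "convex S" "0 \<le> B"
    and "\<And>t. t \<in> S \<Longrightarrow> (f has_real_derivative f' t) (at t within S)"
    and "\<And>t. t \<in> S \<Longrightarrow> \<bar>f' t\<bar> \<le> B"
  shows "B-lipschitz_on S f"
proof (rule lipschitz_onI)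
  fix x y assume "x \<in> S" "y \<in> S"
  have "norm (f x - f y) \<le> B * norm (x - y)"
    by (rule field_differentiable_bound[OF assms(1,3)]) (use assms(4) \<open>x \<in> S\<close> \<open>y \<in> S\<close> in auto)
  then show "dist (f x) (f y) \<le> B * dist x y"
    by (simp add: dist_real_def)
qed (rule assms(2))

lemma uniformly_continuous_on_compose_lipschitz:
  fixes f :: "'a::metric_space \<Rightarrow> 'b::metric_space" and c :: "'c::metric_space \<Rightarrow> 'a"
  assumes "continuous_on K f" "compact K" "c ` S \<subseteq> K" "B-lipschitz_on S c"
  shows "uniformly_continuous_on S (\<lambda>t. f (c t))"
proof (rule uniformly_continuous_on_compose[where g = c])
  show "uniformly_continuous_on S c"
    by (rule lipschitz_on_uniformly_continuous[OF assms(4)])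
  have "uniformly_continuous_on K f"
    using assms(1,2) by (rule compact_uniformly_continuous)
  then show "uniformly_continuous_on (c ` S) f"
    using assms(3) unfolding uniformly_continuous_on_def by (meson subsetD)
qed

lemma tendsto_at_top_cong_ge:
  fixes a :: "'a::linorder"
  assumes "\<And>t. a \<le> t \<Longrightarrow> f t = g t"
  shows "(f \<longlongrightarrow> l) at_top \<longleftrightarrow> (g \<longlongrightarrow> l) at_top"
  by (rule tendsto_cong) (use assms in \<open>auto intro: eventually_mono[OF eventually_ge_at_top[of a]]\<close>)

lemma mono_on_tendsto_SUP_at_top:
  fixes f :: "real \<Rightarrow> real"
  assumes "mono_on {a..} f" "bdd_above (f ` {a..})"
  shows "(f \<longlongrightarrow> (SUP t\<in>{a..}. f t)) at_top"
proof (rule increasing_tendsto)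
  show "\<forall>\<^sub>F t in at_top. f t \<le> (SUP t\<in>{a..}. f t)"
    using eventually_ge_at_top[of a] by eventually_elim (auto intro: cSUP_upper assms(2))
  fix y assume "y < (SUP t\<in>{a..}. f t)"
  then obtain s where "a \<le> s" "y < f s"
    using less_cSUP_iff[OF _ assms(2)] by auto
  then have "y < f t" if "s \<le> t" for t
    using mono_onD[OF assms(1), of s t] that by simp
  then show "\<forall>\<^sub>F t in at_top. y < f t"
    by (rule eventually_mono[OF eventually_ge_at_top])
qed

lemma barbalat:
  fixes F f :: "real \<Rightarrow> real"
  assumes deriv: "\<And>t. a \<le> t \<Longrightarrow> (F has_real_derivative f t) (at t)"
    and uc: "uniformly_continuous_on {a..} f"
    and lim: "(F \<longlongrightarrow> l) at_top"
  shows "(f \<longlongrightarrow> 0) at_top"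
proof (rule tendstoI)
  fix e :: real assume "e > 0"
  then obtain d where "d > 0" and d: "\<And>s t. a \<le> s \<Longrightarrow> a \<le> t \<Longrightarrow> \<bar>s - t\<bar> < d \<Longrightarrow> \<bar>f s - f t\<bar> < e / 2"
    using uc unfolding uniformly_continuous_on_def dist_real_def
    by (metis atLeast_iff half_gt_zero)
  have "\<forall>\<^sub>F t in at_top. \<bar>F t - l\<bar> < e * d / 8"
    using tendstoD[OF lim, of "e * d / 8"] \<open>e > 0\<close> \<open>d > 0\<close> by (simp add: dist_real_def)
  then obtain T where T: "\<And>t. T \<le> t \<Longrightarrow> \<bar>F t - l\<bar> < e * d / 8"
    by (auto simp: eventually_at_top_linorder)
  show "\<forall>\<^sub>F t in at_top. dist (f t) 0 < e"
    unfolding eventually_at_top_linorder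
  proof (intro exI allI impI)
    fix t assume t: "max a T \<le> t"
    show "dist (f t) 0 < e"
    proof (rule ccontr)
      assume "\<not> dist (f t) 0 < e"
      then have big: "e \<le> \<bar>f t\<bar>" by simp
      obtain z where z: "t < z" "z < t + d / 2" "F (t + d / 2) - F t = d / 2 * f z"
        using MVT2[of t "t + d / 2" F f] deriv t \<open>d > 0\<close> by fastforce
      have "\<bar>f z - f t\<bar> < e / 2" using d[of z t] t z by auto
      then have "e / 2 < \<bar>f z\<bar>" using big by linarith
      moreover have "\<bar>F (t + d / 2) - F t\<bar> = d / 2 * \<bar>f z\<bar>"
        unfolding z(3) using \<open>d > 0\<close> by (simp add: abs_mult)
      moreover have "d / 2 * (e / 2) < d / 2 * \<bar>f z\<bar>"
        using mult_strict_left_mono[OF \<open>e / 2 < \<bar>f z\<bar>\<close>, of "d / 2"] \<open>d > 0\<close> by simp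
      ultimately have "d / 2 * (e / 2) < \<bar>F (t + d / 2) - F t\<bar>"
        by linarith
      moreover have "\<bar>F (t + d / 2) - F t\<bar> < e * d / 4"
        using T[of t] T[of "t + d / 2"] t \<open>d > 0\<close> by linarith
      ultimately show False by (simp add: mult.commute)
    qed
  qed
qed

locale uav_guidance =
  fixes V rd k xT yT :: real
    and x y psi rdot :: "real \<Rightarrow> real"
  assumes V_pos: "V > 0"
    and rd_pos: "rd > 0"
    and k_gt: "k > 1 / rd"
    and rdot: "\<forall>t\<ge>0. uav_range xT yT (x t) (y t) > 0 \<longrightarrow>
        ((\<lambda>s. uav_range xT yT (x s) (y s)) has_real_derivative rdot t) (at t within {0..})"
    and x_deriv: "\<forall>t\<ge>0. (x has_real_derivative V * cos (psi t)) (at t within {0..})"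
    and y_deriv: "\<forall>t\<ge>0. (y has_real_derivative V * sin (psi t)) (at t within {0..})"
    and psi_deriv: "\<forall>t\<ge>0. (psi has_real_derivative
        control V k rd (uav_range xT yT (x t) (y t)) (rdot t)) (at t within {0..})"
begin

definition r :: "real \<Rightarrow> real" where
  "r t = uav_range xT yT (x t) (y t)"

text \<open>In terms of the bearing angle \<open>\<theta>\<close>, \<open>P = r cos \<theta>\<close> and \<open>Q = r sin \<theta>\<close>.\<close>
definition P :: "real \<Rightarrow> real" where
  "P t = (xT - x t) * cos (psi t) + (yT - y t) * sin (psi t)"

definition Q :: "real \<Rightarrow> real" where
  "Q t = (xT - x t) * sin (psi t) - (yT - y t) * cos (psi t)"

definition ra :: real where
  "ra = sqrt (rd\<^sup>2 - 1 / k\<^sup>2)"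

definition W :: "real \<Rightarrow> real" where
  "W t = sqrt ((r t)\<^sup>2 - ra\<^sup>2)"

text \<open>The control law, using \<open>rdot = - V P / r\<close> and \<open>cos (pi - arcsin (ra / r)) = - W / r\<close>.\<close>
definition omega :: "real \<Rightarrow> real" where
  "omega t = (if ra \<le> r t then k * V * (P t - W t) / r t else 0)"

definition captured :: "real \<Rightarrow> bool" where
  "captured t \<longleftrightarrow> ra < r t \<and> P t < W t"

lemma k_pos: "k > 0"
  using k_gt rd_pos by (smt (verit) divide_pos_pos)

lemma inverse_k_squared_less: "1 / k\<^sup>2 < rd\<^sup>2"
proof -
  have "1 < k * rd" using k_gt rd_pos k_pos by (simp add: field_simps)
  then have "1 < (k * rd)\<^sup>2" by (simp add: one_less_power)
  then show ?thesis using k_pos by (simp add: field_simps power_mult_distrib)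
qed

lemma ra_pos: "ra > 0"
  using inverse_k_squared_less unfolding ra_def by simp

lemma rd_eq: "rd = sqrt ((1 / k)\<^sup>2 + ra\<^sup>2)"
  using inverse_k_squared_less rd_pos unfolding ra_def by (simp add: power_divide)

lemma r_nonneg: "0 \<le> r t"
  unfolding r_def uav_range_def by simp

lemma r_squared: "(r t)\<^sup>2 = (P t)\<^sup>2 + (Q t)\<^sup>2"
proof -
  have "(r t)\<^sup>2 = ((x t - xT)\<^sup>2 + (y t - yT)\<^sup>2) * ((sin (psi t))\<^sup>2 + (cos (psi t))\<^sup>2)"
    unfolding r_def uav_range_def by simp
  also have "\<dots> = (P t)\<^sup>2 + (Q t)\<^sup>2"
    unfolding P_def Q_def by algebra
  finally show ?thesis .
qed

lemma abs_P_le: "\<bar>P t\<bar> \<le> r t"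
proof (rule power2_le_imp_le)
  show "\<bar>P t\<bar>\<^sup>2 \<le> (r t)\<^sup>2" using r_squared[of t] by simp
qed (rule r_nonneg)

lemma abs_Q_le: "\<bar>Q t\<bar> \<le> r t"
proof (rule power2_le_imp_le)
  show "\<bar>Q t\<bar>\<^sup>2 \<le> (r t)\<^sup>2" using r_squared[of t] by simp
qed (rule r_nonneg)

lemma W_nonneg:
  assumes "ra \<le> r t" shows "0 \<le> W t"
  using power_mono[OF assms, of 2] ra_pos unfolding W_def by simp

lemma W_squared:
  assumes "ra \<le> r t" shows "(W t)\<^sup>2 = (r t)\<^sup>2 - ra\<^sup>2"
  using power_mono[OF assms, of 2] ra_pos unfolding W_def by simp

lemma W_pos: "ra < r t \<Longrightarrow> 0 < W t"
  using ra_pos unfolding W_def by (simp add: power_strict_mono)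

lemma W_le: "W t \<le> r t"
proof -
  have "W t \<le> sqrt ((r t)\<^sup>2)"
    unfolding W_def by (rule real_sqrt_le_mono) simp
  then show ?thesis using r_nonneg[of t] by simp
qed

lemma at_within_nonneg: "0 < t \<Longrightarrow> at t within {0..} = at (t::real)"
  by (rule at_within_interior) simp

lemma DERIV_x: "0 < t \<Longrightarrow> (x has_real_derivative V * cos (psi t)) (at t)"
  using x_deriv at_within_nonneg by (metis less_imp_le)

lemma DERIV_y: "0 < t \<Longrightarrow> (y has_real_derivative V * sin (psi t)) (at t)"
  using y_deriv at_within_nonneg by (metis less_imp_le)

lemma DERIV_r:
  assumes "0 < t" "0 < r t"
  shows "(r has_real_derivative - V * P t / r t) (at t)"
proof -
  have r_eq: "r = (\<lambda>s. sqrt ((x s - xT)\<^sup>2 + (y s - yT)\<^sup>2))"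
    unfolding r_def[abs_def] uav_range_def ..
  have pos: "0 < (x t - xT)\<^sup>2 + (y t - yT)\<^sup>2"
    using assms(2) unfolding r_eq by simp
  have "((\<lambda>s. (x s - xT)\<^sup>2 + (y s - yT)\<^sup>2) has_real_derivative
      2 * (x t - xT) * (V * cos (psi t)) + 2 * (y t - yT) * (V * sin (psi t))) (at t)"
    by (auto intro!: derivative_eq_intros DERIV_x[OF assms(1)] DERIV_y[OF assms(1)]
        simp: algebra_simps)
  moreover have "2 * (x t - xT) * (V * cos (psi t)) + 2 * (y t - yT) * (V * sin (psi t))
      = - 2 * V * P t"
    by (simp add: P_def algebra_simps)
  ultimately have "((\<lambda>s. (x s - xT)\<^sup>2 + (y s - yT)\<^sup>2) has_real_derivative - 2 * V * P t) (at t)"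
    by simp
  from DERIV_chain2[OF DERIV_real_sqrt[OF pos] this]
  have "(r has_real_derivative inverse (r t) / 2 * (- 2 * V * P t)) (at t)"
    unfolding r_eq by simp
  then show ?thesis
    by (simp add: field_simps)
qed

lemma rdot_eq:
  assumes "0 < t" "0 < r t"
  shows "rdot t = - V * P t / r t"
proof -
  have "(r has_real_derivative rdot t) (at t within {0..})"
    using rdot assms unfolding r_def[abs_def] by (simp add: r_def)
  then have "(r has_real_derivative rdot t) (at t)"
    using at_within_nonneg[OF assms(1)] by simp
  then show ?thesis
    using DERIV_r[OF assms] by (rule DERIV_unique)
qed

lemma cos_pi_minus_arcsin:
  assumes "ra \<le> r t"
  shows "cos (pi - arcsin (ra / r t)) = - W t / r t"
proof -
  have rt: "0 < r t" using assms ra_pos by simp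
  have "0 \<le> ra / r t" "ra / r t \<le> 1"
    using assms ra_pos rt by simp_all
  then have "cos (pi - arcsin (ra / r t)) = - sqrt (1 - (ra / r t)\<^sup>2)"
    using cos_arcsin[of "ra / r t"] by simp
  also have "1 - (ra / r t)\<^sup>2 = ((r t)\<^sup>2 - ra\<^sup>2) / (r t)\<^sup>2"
    using rt by (simp add: field_simps)
  finally show ?thesis
    unfolding W_def using rt by (simp add: real_sqrt_divide)
qed

lemma control_eq_omega: "0 < t \<Longrightarrow> control V k rd (r t) (rdot t) = omega t"
  using rdot_eq cos_pi_minus_arcsin ra_pos
  unfolding control_def omega_def ra_def[symmetric] Let_def
  by (auto simp: field_simps)

lemma DERIV_psi: "0 < t \<Longrightarrow> (psi has_real_derivative omega t) (at t)"
  using psi_deriv at_within_nonneg control_eq_omega unfolding r_def[abs_def]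
  by (metis less_imp_le)

lemma DERIV_P: "0 < t \<Longrightarrow> (P has_real_derivative - V - omega t * Q t) (at t)"
  unfolding P_def[abs_def]
  by (auto intro!: derivative_eq_intros DERIV_x DERIV_y DERIV_psi simp: Q_def algebra_simps)
    (simp only: distrib_left[symmetric] sin_cos_squared_add3 mult_1_right)

lemma DERIV_Q: "0 < t \<Longrightarrow> (Q has_real_derivative omega t * P t) (at t)"
  unfolding Q_def[abs_def]
  by (auto intro!: derivative_eq_intros DERIV_x DERIV_y DERIV_psi simp: P_def algebra_simps)

lemma DERIV_W:
  assumes "0 < t" "ra < r t"
  shows "(W has_real_derivative - V * P t / W t) (at t)"
proof -
  have rt: "0 < r t" using assms ra_pos by simp
  have pos: "0 < (r t)\<^sup>2 - ra\<^sup>2"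
    using W_pos[OF assms(2)] unfolding W_def by simp
  have "((\<lambda>s. (r s)\<^sup>2 - ra\<^sup>2) has_real_derivative - 2 * V * P t) (at t)"
    using rt by (auto intro!: derivative_eq_intros DERIV_r[OF assms(1) rt])
  from DERIV_chain2[OF DERIV_real_sqrt[OF pos] this]
  have "(W has_real_derivative inverse (W t) / 2 * (- 2 * V * P t)) (at t)"
    unfolding W_def[abs_def] by (simp add: W_def)
  then show ?thesis
    by (simp add: field_simps)
qed

lemma isCont_r: "0 < t \<Longrightarrow> isCont r t"
  unfolding r_def[abs_def] uav_range_def
  by (intro continuous_intros DERIV_isCont[OF DERIV_x] DERIV_isCont[OF DERIV_y])

lemma isCont_P: "0 < t \<Longrightarrow> isCont P t"
  using DERIV_P DERIV_isCont by blast

lemma isCont_Q: "0 < t \<Longrightarrow> isCont Q t"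
  using DERIV_Q DERIV_isCont by blast

lemma isCont_W: "0 < t \<Longrightarrow> isCont W t"
  unfolding W_def[abs_def] by (intro continuous_intros isCont_r)

lemma abs_omega_le: "\<bar>omega t\<bar> \<le> 2 * k * V"
proof (cases "ra \<le> r t")
  case True
  have rt: "0 < r t" using True ra_pos by simp
  have "\<bar>P t - W t\<bar> \<le> 2 * r t"
    using abs_P_le[of t] W_nonneg[OF True] W_le[of t] by linarith
  then have "\<bar>P t - W t\<bar> / r t \<le> 2"
    using rt by (simp add: divide_le_eq)
  then show ?thesis
    using True rt k_pos V_pos mult_left_mono[of "\<bar>P t - W t\<bar> / r t" 2 "k * V"]
    by (simp add: omega_def abs_mult abs_divide)
next
  case False
  then show ?thesis using k_pos V_pos by (simp add: omega_def)
qed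

lemma straight_flight:
  assumes "0 < a" "a \<le> b" and inside: "\<And>t. a \<le> t \<Longrightarrow> t < b \<Longrightarrow> r t < ra"
  shows "P b = P a - V * (b - a)" "Q b = Q a"
proof -
  have omega0: "omega t = 0" if "a < t" "t < b" for t
    using inside[of t] that by (simp add: omega_def)
  have "P b + V * b = P a + V * a \<and> Q b = Q a"
  proof (cases "a = b")
    case False
    with assms(2) have "a < b" by simp
    have cont: "continuous_on {a..b} P" "continuous_on {a..b} Q"
      using assms(1) by (auto intro!: continuous_at_imp_continuous_on isCont_P isCont_Q)
    have "P b + V * b = P a + V * a"
      by (rule DERIV_isconst_end[where f = "\<lambda>t. P t + V * t", OF \<open>a < b\<close>])
        (use assms(1) omega0 cont in \<open>auto intro!: derivative_eq_intros continuous_intros DERIV_P\<close>)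
    moreover have "Q b = Q a"
    proof (rule DERIV_isconst_end[OF \<open>a < b\<close> cont(2)])
      fix u assume "a < u" "u < b"
      then show "(Q has_real_derivative 0) (at u)"
        using DERIV_Q[of u] omega0[of u] assms(1) by simp
    qed
    ultimately show ?thesis ..
  qed simp
  then show "P b = P a - V * (b - a)" "Q b = Q a"
    by (simp_all add: algebra_simps)
qed

lemma captured_after_moving_out:
  assumes "0 < s" "ra \<le> r s" "P s < 0"
  shows "\<exists>t>s. captured t"
proof -
  have rs: "0 < r s" using assms(2) ra_pos by simp
  have "0 < - V * P s / r s"
    using assms(3) V_pos rs by (simp add: divide_neg_pos mult_pos_neg)
  then obtain d1 where "d1 > 0" and d1: "\<And>h. 0 < h \<Longrightarrow> h < d1 \<Longrightarrow> r s < r (s + h)"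
    using DERIV_pos_inc_right[OF DERIV_r[OF assms(1) rs]] by blast
  have "P \<midarrow>s\<rightarrow> P s"
    using isCont_P[OF assms(1)] by (simp add: isCont_def)
  then obtain d2 where "d2 > 0" and d2: "\<And>t. t \<noteq> s \<Longrightarrow> \<bar>s - t\<bar> < d2 \<Longrightarrow> P t < 0"
    using LIM_fun_less_zero[of P "P s" s] assms(3) by blast
  define h where "h = min d1 d2 / 2"
  have h: "0 < h" "h < d1" "h < d2"
    using \<open>d1 > 0\<close> \<open>d2 > 0\<close> unfolding h_def by auto
  have "ra < r (s + h)"
    using d1[OF h(1,2)] assms(2) by simp
  moreover have "P (s + h) < W (s + h)"
    using d2[of "s + h"] h W_nonneg[of "s + h"] \<open>ra < r (s + h)\<close> by simp
  ultimately show ?thesis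
    using h(1) unfolding captured_def by (intro exI[of _ "s + h"]) simp
qed

lemma leaves_disc:
  assumes "0 < t0" "r t0 < ra"
  shows "\<exists>t\<ge>t0. ra \<le> r t"
proof (rule ccontr)
  assume stays_inside: "\<not> (\<exists>t\<ge>t0. ra \<le> r t)"
  have inside: "r t < ra" if "t0 \<le> t" for t
    using stays_inside that not_le by blast
  define T where "T = t0 + 2 * ra / V"
  have "t0 \<le> T" using ra_pos V_pos by (simp add: T_def)
  have "P T = P t0 - V * (T - t0)"
    by (rule straight_flight(1)) (use assms(1) \<open>t0 \<le> T\<close> inside in auto)
  then have "P T = P t0 - 2 * ra"
    using V_pos by (simp add: T_def)
  moreover have "\<bar>P t0\<bar> < ra" "\<bar>P T\<bar> < ra"
    using abs_P_le[of t0] abs_P_le[of T] inside[OF \<open>t0 \<le> T\<close>] assms(2) by linarith+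
  ultimately show False by linarith
qed

text \<open>Inside the disc of radius \<open>ra\<close> the UAV flies straight, so it reaches the circle
  heading outwards.\<close>
lemma captured_after_inside:
  assumes "0 < t0" "r t0 < ra"
  shows "\<exists>t>t0. captured t"
proof -
  obtain t' where "t0 \<le> t'" "ra \<le> r t'"
    using leaves_disc[OF assms] by blast
  moreover have "continuous_on {t0..t'} r"
    using assms(1) by (auto intro!: continuous_at_imp_continuous_on isCont_r)
  ultimately obtain te where te: "t0 < te" "te \<le> t'" "r te = ra"
    and inside: "\<And>t. t0 \<le> t \<Longrightarrow> t < te \<Longrightarrow> r t < ra"
    using first_crossing_time[of t0 t' r ra] assms(2) by blast
  have "t0 \<le> te" using te(1) by simp
  note flight = straight_flight[OF assms(1) this inside]
  have "(P t0)\<^sup>2 < (P te)\<^sup>2"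
  proof -
    have "(r t0)\<^sup>2 < (r te)\<^sup>2"
      using assms(2) te(3) r_nonneg[of t0] by (simp add: power_strict_mono)
    then show ?thesis using r_squared[of t0] r_squared[of te] flight(2) by simp
  qed
  have "P te < 0"
  proof (rule ccontr)
    assume "\<not> P te < 0"
    moreover have "P te < P t0"
      using flight(1) te(1) V_pos by simp
    ultimately have "(P te)\<^sup>2 < (P t0)\<^sup>2"
      by (intro power_strict_mono) auto
    with \<open>(P t0)\<^sup>2 < (P te)\<^sup>2\<close> show False by simp
  qed
  moreover have "0 < te" "ra \<le> r te"
    using assms(1) te(1,3) by simp_all
  ultimately obtain t where "te < t" "captured t"
    using captured_after_moving_out by blast
  with te(1) show ?thesis
    by (intro exI[of _ t]) simp
qed

lemma captured_after_touching:
  assumes s: "0 < s" "r s = ra" and outside: "\<And>t. s \<le> t \<Longrightarrow> ra \<le> r t"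
  shows "\<exists>t>s. captured t"
proof -
  have rs: "0 < r s" using s ra_pos by simp
  have "P s \<le> 0"
  proof (rule ccontr)
    assume "\<not> P s \<le> 0"
    then have "0 < V * P s / r s"
      using V_pos rs by (simp add: divide_pos_pos)
    then have "- V * P s / r s < 0" by simp
    then obtain d where "0 < d" and d: "\<And>h. 0 < h \<Longrightarrow> h < d \<Longrightarrow> r (s + h) < r s"
      using DERIV_neg_dec_right[OF DERIV_r[OF s(1) rs]] by blast
    then have "r (s + d / 2) < ra" using s(2) by simp
    with outside[of "s + d / 2"] \<open>0 < d\<close> show False by simp
  qed
  show ?thesis
  proof (cases "P s < 0")
    case True
    then show ?thesis
      using captured_after_moving_out[of s] s by auto
  next
    case False
    \<comment> \<open>Grazing the circle (\<open>P = W = 0\<close>) the turn rate vanishes, so \<open>P\<close> turns negative.\<close>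
    then have "P s = 0" using \<open>P s \<le> 0\<close> by simp
    moreover have "W s = 0" using s(2) by (simp add: W_def)
    ultimately have "omega s = 0" using s(2) by (simp add: omega_def)
    then have "(P has_real_derivative - V) (at s)" using DERIV_P[OF s(1)] by simp
    moreover have "- V < 0" using V_pos by simp
    ultimately obtain d where "0 < d" and d: "\<And>h. 0 < h \<Longrightarrow> h < d \<Longrightarrow> P (s + h) < P s"
      using DERIV_neg_dec_right by blast
    define s' where "s' = s + d / 2"
    have "s < s'" "P s' < 0"
      using \<open>0 < d\<close> d[of "d / 2"] \<open>P s = 0\<close> unfolding s'_def by simp_all
    then obtain t where "s' < t" "captured t"
      using captured_after_moving_out[of s'] outside[of s'] s(1) by auto
    with \<open>s < s'\<close> show ?thesis by (intro exI[of _ t]) simp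
  qed
qed

text \<open>Strictly outside the disc and never captured, \<open>W\<close> would decrease at rate at least \<open>V\<close>.\<close>
lemma captured_if_strictly_outside:
  assumes outside: "\<And>t. 0 < t \<Longrightarrow> ra < r t"
  shows "\<exists>t>0. captured t"
proof (rule ccontr)
  assume never: "\<not> (\<exists>t>0. captured t)"
  have W_le_P: "W t \<le> P t" if "0 < t" for t
    using never outside[OF that] that unfolding captured_def by (meson not_less)
  define T where "T = W 1 / V + 2"
  have "1 \<le> T"
    using W_nonneg[OF less_imp_le[OF outside[of 1]]] V_pos by (simp add: T_def)
  have "W T + V * T \<le> W 1 + V * 1"
  proof (rule DERIV_nonpos_imp_decreasing_open[OF \<open>1 \<le> T\<close>])
    fix u assume "1 < u" "u < T"
    then have u: "0 < u" "ra < r u" using outside by auto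
    have "1 \<le> P u / W u"
      using W_le_P[OF u(1)] W_pos[OF u(2)] by simp
    then have "- V * P u / W u + V \<le> 0"
      using V_pos mult_left_mono[of 1 "P u / W u" V] by simp
    moreover have "((\<lambda>t. W t + V * t) has_real_derivative - V * P u / W u + V) (at u)"
      using DERIV_W[OF u] by (auto intro!: derivative_eq_intros)
    ultimately show "\<exists>y. ((\<lambda>t. W t + V * t) has_real_derivative y) (at u) \<and> y \<le> 0"
      by blast
  next
    show "continuous_on {1..T} (\<lambda>t. W t + V * t)"
      by (auto intro!: continuous_at_imp_continuous_on continuous_intros isCont_W)
  qed
  then have "W T \<le> W 1 - V * (T - 1)"
    by (simp add: algebra_simps)
  also have "\<dots> = - V"
    using V_pos by (simp add: T_def field_simps)
  finally have "W T < 0"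
    using V_pos by simp
  moreover have "0 \<le> W T"
    using W_nonneg[OF less_imp_le[OF outside[of T]]] \<open>1 \<le> T\<close> by simp
  ultimately show False by simp
qed

lemma eventually_captured: "\<exists>t>0. captured t"
proof -
  consider (inside) t0 where "0 < t0" "r t0 < ra"
    | (touching) s where "0 < s" "r s = ra" "\<And>t. 0 < t \<Longrightarrow> ra \<le> r t"
    | (outside) "\<And>t. 0 < t \<Longrightarrow> ra < r t"
    by (meson not_less order.not_eq_order_implies_strict)
  then show ?thesis
  proof cases
    case inside
    then show ?thesis
      using captured_after_inside by (meson less_trans)
  next
    case touching
    then have "ra \<le> r t" if "s \<le> t" for t
      using that by simp
    then obtain t where "s < t" "captured t"
      using captured_after_touching[of s] touching(1,2) by blast
    with touching(1) show ?thesis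
      by (intro exI[of _ t]) simp
  next
    case outside
    then show ?thesis
      by (rule captured_if_strictly_outside)
  qed
qed

lemma DERIV_capture_margin:
  assumes "0 < t" "ra < r t"
  shows "((\<lambda>s. (W s - P s) * exp (k * V * s)) has_real_derivative
      exp (k * V * t) * ((W t - P t) * (V / W t + k * V * (1 - Q t / r t)))) (at t)"
proof -
  have rt: "0 < r t" and Wt: "0 < W t"
    using assms(2) ra_pos W_pos by auto
  have "((\<lambda>s. (W s - P s) * exp (k * V * s)) has_real_derivative
      (- V * P t / W t - (- V - omega t * Q t)) * exp (k * V * t)
        + (W t - P t) * (exp (k * V * t) * (k * V))) (at t)"
    by (auto intro!: derivative_eq_intros DERIV_W[OF assms] DERIV_P[OF assms(1)])
  moreover have "omega t = k * V * (P t - W t) / r t"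
    using assms(2) by (simp add: omega_def)
  ultimately show ?thesis
    using rt Wt by (simp add: field_simps)
qed

lemma capture_margin_mono:
  assumes "0 < a" "a \<le> b" and captured: "\<And>u. a < u \<Longrightarrow> u < b \<Longrightarrow> captured u"
  shows "(W a - P a) * exp (k * V * a) \<le> (W b - P b) * exp (k * V * b)"
proof (rule DERIV_nonneg_imp_increasing_open[where f = "\<lambda>s. (W s - P s) * exp (k * V * s)", OF assms(2)])
  fix u assume "a < u" "u < b"
  then have u: "0 < u" "ra < r u" "P u < W u"
    using assms(1) captured[of u] unfolding captured_def by auto
  have "Q u / r u \<le> 1"
    using abs_Q_le[of u] u(2) ra_pos by (simp add: divide_le_eq)
  then have "0 \<le> exp (k * V * u) * ((W u - P u) * (V / W u + k * V * (1 - Q u / r u)))"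
    using u k_pos V_pos W_pos[OF u(2)] by simp
  then show "\<exists>y. ((\<lambda>s. (W s - P s) * exp (k * V * s)) has_real_derivative y) (at u) \<and> 0 \<le> y"
    using DERIV_capture_margin[OF u(1,2)] by blast
next
  show "continuous_on {a..b} (\<lambda>s. (W s - P s) * exp (k * V * s))"
    using assms(1)
    by (auto intro!: continuous_at_imp_continuous_on continuous_intros isCont_P isCont_W)
qed

text \<open>By the monotonicity of \<open>(W - P) e\<^sup>k\<^sup>V\<^sup>t\<close>, the capture region can only be left through the
  circle \<open>r = ra\<close>, where the UAV would be heading outwards.\<close>
lemma captured_forever:
  assumes "0 < t1" "captured t1" "t1 \<le> t"
  shows "ra < r t"
proof (rule ccontr)
  assume "\<not> ra < r t"
  define f where "f s = max (ra - r s) (P s - W s)" for s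
  have "continuous_on {t1..t} f"
    using assms(1) unfolding f_def
    by (auto intro!: continuous_at_imp_continuous_on continuous_intros isCont_r isCont_P isCont_W)
  moreover have "f t1 < 0" "0 \<le> f t"
    using assms(2) \<open>\<not> ra < r t\<close> unfolding f_def captured_def by auto
  ultimately obtain te where te: "t1 < te" "f te = 0"
    and before: "\<And>s. t1 \<le> s \<Longrightarrow> s < te \<Longrightarrow> f s < 0"
    using first_crossing_time[of t1 t f 0] assms(3) by blast
  have inside: "ra < r s" "P s < W s" if "t1 \<le> s" "s < te" for s
    using before[OF that] unfolding f_def by auto
  have "0 < (W t1 - P t1) * exp (k * V * t1)"
    using assms(2) unfolding captured_def by simp
  also have "\<dots> \<le> (W te - P te) * exp (k * V * te)"
    using assms(1) te(1) inside by (intro capture_margin_mono) (auto simp: captured_def)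
  finally have "P te < W te"
    by (simp add: zero_less_mult_iff)
  then have rte: "r te = ra"
    using te(2) unfolding f_def by (auto simp: max_def split: if_splits)
  then have "P te < 0"
    using \<open>P te < W te\<close> by (simp add: W_def)
  have "0 < te" "0 < r te"
    using assms(1) te(1) rte ra_pos by simp_all
  moreover have "0 < - V * P te / r te"
    using \<open>P te < 0\<close> V_pos \<open>0 < r te\<close> by (simp add: divide_neg_pos mult_pos_neg)
  ultimately obtain d where "0 < d" and d: "\<And>h. 0 < h \<Longrightarrow> h < d \<Longrightarrow> r (te - h) < r te"
    using DERIV_pos_inc_left[OF DERIV_r] by blast
  define h where "h = min d (te - t1) / 2"
  have h: "0 < h" "h < d" "h \<le> te - t1"
    using \<open>0 < d\<close> te(1) unfolding h_def by auto
  show False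
    using d[OF h(1,2)] inside(1)[of "te - h"] h(1,3) rte by simp
qed

definition G :: "real \<Rightarrow> real" where
  "G \<rho> = (\<rho> * sqrt (\<rho>\<^sup>2 - ra\<^sup>2) - ra\<^sup>2 * ln (\<rho> + sqrt (\<rho>\<^sup>2 - ra\<^sup>2))) / 2"

lemma DERIV_G:
  assumes "ra < \<rho>"
  shows "(G has_real_derivative sqrt (\<rho>\<^sup>2 - ra\<^sup>2)) (at \<rho>)"
proof -
  define S where "S = sqrt (\<rho>\<^sup>2 - ra\<^sup>2)"
  have pos: "0 < \<rho>\<^sup>2 - ra\<^sup>2"
    using assms ra_pos by (simp add: power_strict_mono)
  then have S: "0 < S" "S\<^sup>2 = \<rho>\<^sup>2 - ra\<^sup>2"
    unfolding S_def by simp_all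
  have "0 < \<rho> + S"
    using assms ra_pos S(1) by simp
  have deriv: "(G has_real_derivative
      (S + \<rho> * (\<rho> / S) - ra\<^sup>2 * ((1 + \<rho> / S) / (\<rho> + S))) / 2) (at \<rho>)"
    unfolding G_def[abs_def] using pos \<open>0 < \<rho> + S\<close>
    by (auto intro!: derivative_eq_intros simp: S_def[symmetric] field_simps)
  have "1 + \<rho> / S = (\<rho> + S) / S"
    using S(1) by (simp add: field_simps)
  then have "(1 + \<rho> / S) / (\<rho> + S) = 1 / S"
    using \<open>0 < \<rho> + S\<close> by simp
  then have "(S + \<rho> * (\<rho> / S) - ra\<^sup>2 * ((1 + \<rho> / S) / (\<rho> + S))) / 2
      = (S + \<rho> * (\<rho> / S) - ra\<^sup>2 * (1 / S)) / 2"
    by (simp only:)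
  also have "\<dots> = (S + S\<^sup>2 / S) / 2"
    unfolding S(2) by (simp add: power2_eq_square diff_divide_distrib)
  also have "\<dots> = S"
    using S(1) by (simp add: power2_eq_square)
  finally have "(S + \<rho> * (\<rho> / S) - ra\<^sup>2 * ((1 + \<rho> / S) / (\<rho> + S))) / 2 = S" .
  with deriv show ?thesis
    unfolding S_def by (simp only:)
qed

lemma G_lower_bound:
  assumes "ra \<le> \<rho>"
  shows "G ra + (\<rho> - ra)\<^sup>2 / 2 \<le> G \<rho>"
proof -
  have "G ra - (ra - ra)\<^sup>2 / 2 \<le> G \<rho> - (\<rho> - ra)\<^sup>2 / 2"
  proof (rule DERIV_nonneg_imp_increasing_open[where f = "\<lambda>s. G s - (s - ra)\<^sup>2 / 2", OF assms])
    fix s assume "ra < s" "s < \<rho>"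
    have "(s - ra)\<^sup>2 \<le> s\<^sup>2 - ra\<^sup>2"
      using \<open>ra < s\<close> ra_pos by (simp add: power2_eq_square algebra_simps)
    then have "0 \<le> sqrt (s\<^sup>2 - ra\<^sup>2) - (s - ra)"
      using real_le_rsqrt by simp
    moreover have "((\<lambda>s. G s - (s - ra)\<^sup>2 / 2) has_real_derivative sqrt (s\<^sup>2 - ra\<^sup>2) - (s - ra)) (at s)"
      using DERIV_G[OF \<open>ra < s\<close>] by (auto intro!: derivative_eq_intros simp: field_simps)
    ultimately show "\<exists>y. ((\<lambda>s. G s - (s - ra)\<^sup>2 / 2) has_real_derivative y) (at s) \<and> 0 \<le> y"
      by blast
  next
    have "s + sqrt (s\<^sup>2 - ra\<^sup>2) \<noteq> 0" if "ra \<le> s" for s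
    proof -
      have "0 \<le> sqrt (s\<^sup>2 - ra\<^sup>2)"
        using power_mono[OF that, of 2] ra_pos by simp
      then show ?thesis using that ra_pos by linarith
    qed
    then show "continuous_on {ra..\<rho>} (\<lambda>s. G s - (s - ra)\<^sup>2 / 2)"
      unfolding G_def by (intro continuous_intros) auto
  qed
  then show ?thesis by simp
qed

definition lyapunov :: "real \<Rightarrow> real" where
  "lyapunov t = Q t - k * G (r t)"

lemma DERIV_lyapunov:
  assumes "0 < t" "ra < r t"
  shows "(lyapunov has_real_derivative k * V * (P t)\<^sup>2 / r t) (at t)"
proof -
  have rt: "0 < r t" using assms ra_pos by simp
  have "(lyapunov has_real_derivative omega t * P t - k * (W t * (- V * P t / r t))) (at t)"
    unfolding lyapunov_def[abs_def] W_def
    by (auto intro!: derivative_eq_intros DERIV_Q[OF assms(1)]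
        DERIV_chain2[OF DERIV_G[OF assms(2)] DERIV_r[OF assms(1) rt]])
  moreover have "omega t = k * V * (P t - W t) / r t"
    using assms(2) by (simp add: omega_def)
  ultimately show ?thesis
    using rt by (simp add: field_simps power2_eq_square)
qed

lemma bearing_eq_Arg:
  assumes "0 < r t"
  shows "bearing xT yT (x t) (y t) (psi t) =
    (let a = Arg (Complex (P t / r t) (Q t / r t)) in if a < 0 then a + 2 * pi else a)"
proof -
  let ?z = "Complex (xT - x t) (yT - y t)"
  have "cmod ?z = r t"
    unfolding r_def uav_range_def cmod_def by (simp add: power2_commute)
  then have "cis (psi t) / ?z = cis (psi t) * cnj ?z / of_real ((r t)\<^sup>2)"
    by (subst complex_div_cnj) simp
  also have "cis (psi t) * cnj ?z = Complex (P t) (Q t)"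
    by (simp add: complex_eq_iff P_def Q_def algebra_simps)
  also have "Complex (P t) (Q t) / of_real ((r t)\<^sup>2)
      = of_real (1 / r t) * Complex (P t / r t) (Q t / r t)"
    using assms by (simp add: complex_eq_iff power2_eq_square)
  finally show ?thesis
    using assms unfolding bearing_def by simp
qed

end

locale uav_captured = uav_guidance +
  fixes t1 :: real
  assumes t1_pos: "0 < t1"
    and outside_after: "\<And>t. t1 \<le> t \<Longrightarrow> ra < r t"
begin

lemma pos_after: "t1 \<le> t \<Longrightarrow> 0 < t"
  using t1_pos by simp

lemma r_pos_after: "t1 \<le> t \<Longrightarrow> 0 < r t"
  using outside_after ra_pos by (meson less_trans)

lemma omega_after: "t1 \<le> t \<Longrightarrow> omega t = k * V * (P t - W t) / r t"
  using outside_after by (simp add: omega_def less_imp_le)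

lemma lyapunov_mono: "mono_on {t1..} lyapunov"
proof (rule mono_onI)
  fix s t assume "s \<in> {t1..}" "t \<in> {t1..}" "s \<le> t"
  then have deriv: "(lyapunov has_real_derivative k * V * (P u)\<^sup>2 / r u) (at u)"
    if "s \<le> u" for u
    using that DERIV_lyapunov pos_after outside_after by simp
  show "lyapunov s \<le> lyapunov t"
  proof (rule DERIV_nonneg_imp_increasing_open[where f = lyapunov, OF \<open>s \<le> t\<close>])
    fix u assume "s < u" "u < t"
    then show "\<exists>y. (lyapunov has_real_derivative y) (at u) \<and> 0 \<le> y"
      using deriv[of u] k_pos V_pos r_pos_after[of u] \<open>s \<in> {t1..}\<close> by force
  next
    show "continuous_on {s..t} lyapunov"
      by (intro continuous_at_imp_continuous_on ballI DERIV_isCont[OF deriv]) auto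
  qed
qed

lemma lyapunov_le:
  assumes "t1 \<le> t"
  shows "lyapunov t \<le> ra - k * G ra + (r t - ra) - k * (r t - ra)\<^sup>2 / 2"
proof -
  have "k * (G ra + (r t - ra)\<^sup>2 / 2) \<le> k * G (r t)"
    using G_lower_bound[of "r t"] outside_after[OF assms] k_pos by simp
  then show ?thesis
    using abs_Q_le[of t] unfolding lyapunov_def by (simp add: algebra_simps)
qed

definition R :: real where
  "R = ra + max (4 / k) (ra - k * G ra - lyapunov t1)"

text \<open>The Lyapunov function is nondecreasing and \<open>- k G(r)\<close> decreases quadratically in \<open>r\<close>.\<close>
lemma r_le_R:
  assumes "t1 \<le> t"
  shows "r t \<le> R"
proof -
  define C where "C = ra - k * G ra - lyapunov t1"
  define u where "u = r t - ra"
  have "lyapunov t1 \<le> lyapunov t"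
    using lyapunov_mono assms by (auto dest: mono_onD)
  then have bound: "k * u\<^sup>2 / 2 - u \<le> C"
    using lyapunov_le[OF assms] unfolding C_def u_def by simp
  have "u \<le> max (4 / k) C"
  proof (cases "u \<le> 4 / k")
    case False
    moreover have "0 < 4 / k" using k_pos by simp
    ultimately have "0 < u" "4 \<le> k * u"
      using k_pos by (linarith, simp add: field_simps)
    then have "2 * u \<le> k * u\<^sup>2 / 2"
      using mult_right_mono[of 4 "k * u" u] by (simp add: power2_eq_square mult.assoc)
    with bound show ?thesis by simp
  qed simp
  then show ?thesis
    unfolding R_def C_def u_def by simp
qed

lemma R_pos: "0 < R"
  using r_le_R[of t1] r_pos_after[of t1] by simp

lemma lyapunov_convergent: "\<exists>l. (lyapunov \<longlongrightarrow> l) at_top"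
proof -
  have "lyapunov t \<le> R - k * G ra" if "t1 \<le> t" for t
  proof -
    have "0 \<le> k * (r t - ra)\<^sup>2 / 2"
      using k_pos by simp
    then show ?thesis
      using lyapunov_le[OF that] r_le_R[OF that] by linarith
  qed
  then have "bdd_above (lyapunov ` {t1..})"
    by (intro bdd_aboveI[of _ "R - k * G ra"]) auto
  with lyapunov_mono show ?thesis
    using mono_on_tendsto_SUP_at_top by blast
qed

lemma abs_omega_mult_le:
  assumes "t1 \<le> t" "\<bar>v\<bar> \<le> r t"
  shows "\<bar>omega t * v\<bar> \<le> 2 * k * V * R"
  using abs_omega_le[of t] assms r_le_R[OF assms(1)] k_pos V_pos
  by (simp add: abs_mult mult_mono)

lemma lipschitz_on_after:
  assumes "0 \<le> B"
    and "\<And>t. t1 \<le> t \<Longrightarrow> (f has_real_derivative f' t) (at t)"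
    and "\<And>t. t1 \<le> t \<Longrightarrow> \<bar>f' t\<bar> \<le> B"
  shows "B-lipschitz_on {t1..} f"
  using assms by (intro DERIV_bounded_imp_lipschitz_on) (auto intro: has_field_derivative_at_within)

lemma lipschitz_on_P: "(V + 2 * k * V * R)-lipschitz_on {t1..} P"
proof (rule lipschitz_on_after)
  show "0 \<le> V + 2 * k * V * R"
    using V_pos k_pos R_pos by simp
  fix t assume "t1 \<le> t"
  show "(P has_real_derivative - V - omega t * Q t) (at t)"
    using DERIV_P pos_after \<open>t1 \<le> t\<close> by blast
  show "\<bar>- V - omega t * Q t\<bar> \<le> V + 2 * k * V * R"
    using abs_omega_mult_le[OF \<open>t1 \<le> t\<close> abs_Q_le] V_pos by linarith
qed

lemma lipschitz_on_Q: "(2 * k * V * R)-lipschitz_on {t1..} Q"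
proof (rule lipschitz_on_after)
  show "0 \<le> 2 * k * V * R"
    using V_pos k_pos R_pos by simp
  fix t assume "t1 \<le> t"
  show "(Q has_real_derivative omega t * P t) (at t)"
    using DERIV_Q pos_after \<open>t1 \<le> t\<close> by blast
  show "\<bar>omega t * P t\<bar> \<le> 2 * k * V * R"
    using abs_omega_mult_le[OF \<open>t1 \<le> t\<close> abs_P_le] .
qed

lemma lipschitz_on_r: "V-lipschitz_on {t1..} r"
proof (rule lipschitz_on_after)
  show "0 \<le> V"
    using V_pos by simp
  fix t assume "t1 \<le> t"
  show "(r has_real_derivative - V * P t / r t) (at t)"
    using DERIV_r pos_after r_pos_after \<open>t1 \<le> t\<close> by blast
  have "\<bar>P t\<bar> / r t \<le> 1"
    using abs_P_le[of t] r_pos_after[OF \<open>t1 \<le> t\<close>] by simp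
  then show "\<bar>- V * P t / r t\<bar> \<le> V"
    using V_pos mult_left_mono[of "\<bar>P t\<bar> / r t" 1 V] r_pos_after[OF \<open>t1 \<le> t\<close>]
    by (simp add: abs_mult abs_divide)
qed

lemma uniformly_continuous_on_trajectory:
  fixes \<Phi> :: "real \<times> real \<times> real \<Rightarrow> real"
  assumes "continuous_on (UNIV \<times> UNIV \<times> {ra..}) \<Phi>"
  shows "uniformly_continuous_on {t1..} (\<lambda>t. \<Phi> (P t, Q t, r t))"
proof -
  define K where "K = {-R..R} \<times> {-R..R} \<times> {ra..R}"
  have "compact K"
    unfolding K_def by (intro compact_Times compact_Icc)
  have cont: "continuous_on K \<Phi>"
    using assms by (rule continuous_on_subset) (auto simp: K_def)
  have image: "(\<lambda>t. (P t, Q t, r t)) ` {t1..} \<subseteq> K"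
  proof (rule image_subsetI)
    fix t assume "t \<in> {t1..}"
    then have "t1 \<le> t" by simp
    then show "(P t, Q t, r t) \<in> K"
      using abs_P_le[of t] abs_Q_le[of t] r_le_R[OF \<open>t1 \<le> t\<close>] outside_after[OF \<open>t1 \<le> t\<close>]
      unfolding K_def by (simp add: abs_le_iff)
  qed
  show ?thesis
    using lipschitz_on_Pair[OF lipschitz_on_P lipschitz_on_Pair[OF lipschitz_on_Q lipschitz_on_r]]
    by (rule uniformly_continuous_on_compose_lipschitz[OF cont \<open>compact K\<close> image])
qed

lemma P_tendsto_zero: "(P \<longlongrightarrow> 0) at_top"
proof -
  obtain l where lim: "(lyapunov \<longlongrightarrow> l) at_top"
    using lyapunov_convergent by blast
  have "continuous_on (UNIV \<times> UNIV \<times> {ra..}) (\<lambda>z. k * V * (fst z)\<^sup>2 / snd (snd z))"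
    using ra_pos by (intro continuous_intros) auto
  from uniformly_continuous_on_trajectory[OF this]
  have uc: "uniformly_continuous_on {t1..} (\<lambda>t. k * V * (P t)\<^sup>2 / r t)"
    by simp
  have deriv: "(lyapunov has_real_derivative k * V * (P t)\<^sup>2 / r t) (at t)" if "t1 \<le> t" for t
    using DERIV_lyapunov pos_after outside_after that by blast
  have decay: "((\<lambda>t. k * V * (P t)\<^sup>2 / r t) \<longlongrightarrow> 0) at_top"
    by (rule barbalat[OF deriv uc lim])
  have "norm ((P t)\<^sup>2) \<le> norm (k * V * (P t)\<^sup>2 / r t) * (R / (k * V))" if "t1 \<le> t" for t
  proof -
    have "(P t)\<^sup>2 * 1 \<le> (P t)\<^sup>2 * (R / r t)"
      using r_le_R[OF that] r_pos_after[OF that] by (intro mult_left_mono) simp_all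
    then show ?thesis
      using r_pos_after[OF that] k_pos V_pos by (simp add: field_simps)
  qed
  then have "\<forall>\<^sub>F t in at_top. norm ((P t)\<^sup>2) \<le> norm (k * V * (P t)\<^sup>2 / r t) * (R / (k * V))"
    by (rule eventually_mono[OF eventually_ge_at_top])
  with decay have "((\<lambda>t. (P t)\<^sup>2) \<longlongrightarrow> 0) at_top"
    by (rule tendsto_0_le)
  then have "((\<lambda>t. sqrt ((P t)\<^sup>2)) \<longlongrightarrow> sqrt 0) at_top"
    by (rule tendsto_real_sqrt)
  then show ?thesis
    by (simp add: tendsto_rabs_zero_iff)
qed

lemma omega_Q_tendsto: "((\<lambda>t. omega t * Q t) \<longlongrightarrow> - V) at_top"
proof -
  define \<Phi> where "\<Phi> z = - V - k * V * (fst z - sqrt ((snd (snd z))\<^sup>2 - ra\<^sup>2)) / snd (snd z) * fst (snd z)"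
    for z :: "real \<times> real \<times> real"
  have P_deriv: "- V - omega t * Q t = \<Phi> (P t, Q t, r t)" if "t1 \<le> t" for t
    using omega_after[OF that] by (simp add: \<Phi>_def W_def)
  have "continuous_on (UNIV \<times> UNIV \<times> {ra..}) \<Phi>"
    unfolding \<Phi>_def using ra_pos by (intro continuous_intros) auto
  then have uc: "uniformly_continuous_on {t1..} (\<lambda>t. \<Phi> (P t, Q t, r t))"
    by (rule uniformly_continuous_on_trajectory)
  have deriv: "(P has_real_derivative \<Phi> (P t, Q t, r t)) (at t)" if "t1 \<le> t" for t
    using DERIV_P[OF pos_after[OF that]] P_deriv[OF that] by simp
  have "((\<lambda>t. \<Phi> (P t, Q t, r t)) \<longlongrightarrow> 0) at_top"
    by (rule barbalat[OF deriv uc P_tendsto_zero])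
  then have "((\<lambda>t. - V - omega t * Q t) \<longlongrightarrow> 0) at_top"
    using tendsto_at_top_cong_ge[of t1, OF P_deriv] by simp
  then have "((\<lambda>t. - V - (- V - omega t * Q t)) \<longlongrightarrow> - V - 0) at_top"
    by (intro tendsto_intros)
  then show ?thesis by simp
qed

lemma P_over_r_tendsto_zero: "((\<lambda>t. P t / r t) \<longlongrightarrow> 0) at_top"
proof (rule tendsto_0_le[OF P_tendsto_zero, where K = "1 / ra"])
  have "norm (P t / r t) \<le> norm (P t) * (1 / ra)" if "t1 \<le> t" for t
    using outside_after[OF that] r_pos_after[OF that] ra_pos
    by (simp add: abs_divide divide_left_mono)
  then show "\<forall>\<^sub>F t in at_top. norm (P t / r t) \<le> norm (P t) * (1 / ra)"
    by (rule eventually_mono[OF eventually_ge_at_top])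
qed

lemma abs_Q_over_r_le: "\<bar>Q t / r t\<bar> \<le> 1"
  using abs_Q_le[of t] r_nonneg[of t] by (cases "r t = 0") (auto simp: abs_divide divide_le_eq_1)

text \<open>Since \<open>P \<longrightarrow> 0\<close>, the limit \<open>omega Q = k V (P - W) Q / r \<longrightarrow> -V\<close> forces \<open>W Q / r \<longrightarrow> 1 / k\<close>.\<close>
lemma W_Q_over_r_tendsto: "((\<lambda>t. W t * (Q t / r t)) \<longlongrightarrow> 1 / k) at_top"
proof -
  have "norm (P t * (Q t / r t)) \<le> norm (P t) * 1" for t
    using mult_left_mono[OF abs_Q_over_r_le[of t], of "\<bar>P t\<bar>"] by (simp add: abs_mult)
  then have "((\<lambda>t. P t * (Q t / r t)) \<longlongrightarrow> 0) at_top"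
    by (intro tendsto_0_le[OF P_tendsto_zero] always_eventually allI)
  then have "((\<lambda>t. P t * (Q t / r t) - omega t * Q t / (k * V)) \<longlongrightarrow> 0 - (- V) / (k * V)) at_top"
    using k_pos V_pos by (intro tendsto_intros omega_Q_tendsto) auto
  moreover have eq: "P t * (Q t / r t) - omega t * Q t / (k * V) = W t * (Q t / r t)" if "t1 \<le> t" for t
    unfolding omega_after[OF that] using r_pos_after[OF that] k_pos V_pos by (simp add: field_simps)
  ultimately show ?thesis
    using V_pos tendsto_at_top_cong_ge[of t1, OF eq] by simp
qed

lemma Q_over_r_tendsto: "((\<lambda>t. Q t / r t) \<longlongrightarrow> 1) at_top"
proof -
  have "((\<lambda>t. 1 - (P t / r t)\<^sup>2) \<longlongrightarrow> 1 - 0\<^sup>2) at_top"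
    by (intro tendsto_intros P_over_r_tendsto_zero)
  moreover have eq: "1 - (P t / r t)\<^sup>2 = (Q t / r t)\<^sup>2" if "t1 \<le> t" for t
  proof -
    have "1 - (P t / r t)\<^sup>2 = ((r t)\<^sup>2 - (P t)\<^sup>2) / (r t)\<^sup>2"
      using r_pos_after[OF that] by (simp add: field_simps)
    then show ?thesis
      by (simp add: r_squared power_divide)
  qed
  ultimately have "((\<lambda>t. (Q t / r t)\<^sup>2) \<longlongrightarrow> 1) at_top"
    using tendsto_at_top_cong_ge[of t1, OF eq] by simp
  then have "((\<lambda>t. sqrt ((Q t / r t)\<^sup>2)) \<longlongrightarrow> sqrt 1) at_top"
    by (rule tendsto_real_sqrt)
  then have abs_lim: "((\<lambda>t. \<bar>Q t / r t\<bar>) \<longlongrightarrow> 1) at_top"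
    by simp
  have "\<forall>\<^sub>F t in at_top. 0 < W t * (Q t / r t)"
    using order_tendstoD(1)[OF W_Q_over_r_tendsto, of 0] k_pos by simp
  then have ev: "\<forall>\<^sub>F t in at_top. \<bar>Q t / r t\<bar> = Q t / r t"
    using eventually_ge_at_top[of t1]
  proof eventually_elim
    case (elim t)
    then have "0 < Q t / r t"
      using zero_less_mult_pos[of "W t" "Q t / r t"] W_pos[OF outside_after] by blast
    then show ?case by (rule abs_of_pos)
  qed
  with abs_lim show ?thesis
    using tendsto_cong[OF ev] by simp
qed

lemma r_tendsto: "(r \<longlongrightarrow> rd) at_top"
proof -
  have "((\<lambda>t. W t * (Q t / r t) / (Q t / r t)) \<longlongrightarrow> (1 / k) / 1) at_top"
    by (intro tendsto_intros W_Q_over_r_tendsto Q_over_r_tendsto) simp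
  moreover have "\<forall>\<^sub>F t in at_top. 0 < Q t / r t"
    using order_tendstoD(1)[OF Q_over_r_tendsto, of 0] by simp
  then have "\<forall>\<^sub>F t in at_top. W t * (Q t / r t) / (Q t / r t) = W t"
    by eventually_elim (auto simp: zero_less_divide_iff)
  ultimately have "(W \<longlongrightarrow> 1 / k) at_top"
    using tendsto_cong by fastforce
  then have "((\<lambda>t. sqrt ((W t)\<^sup>2 + ra\<^sup>2)) \<longlongrightarrow> sqrt ((1 / k)\<^sup>2 + ra\<^sup>2)) at_top"
    by (intro tendsto_intros)
  moreover have eq: "sqrt ((W t)\<^sup>2 + ra\<^sup>2) = r t" if "t1 \<le> t" for t
    using W_squared[of t] outside_after[OF that] r_pos_after[OF that] by simp
  ultimately show ?thesis
    unfolding rd_eq[symmetric] using tendsto_at_top_cong_ge[of t1, OF eq] by simp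
qed

lemma bearing_tendsto: "((\<lambda>t. bearing xT yT (x t) (y t) (psi t)) \<longlongrightarrow> pi / 2) at_top"
proof -
  have "((\<lambda>t. Complex (P t / r t) (Q t / r t)) \<longlongrightarrow> Complex 0 1) at_top"
    by (rule tendsto_Complex[OF P_over_r_tendsto_zero Q_over_r_tendsto])
  moreover have "Complex 0 1 = \<i>"
    by (simp add: complex_eq_iff)
  moreover have "isCont Arg \<i>"
    by (rule continuous_at_Arg) (simp add: complex_nonpos_Reals_iff)
  ultimately have Arg_lim: "((\<lambda>t. Arg (Complex (P t / r t) (Q t / r t))) \<longlongrightarrow> pi / 2) at_top"
    using isCont_tendsto_compose[of "\<i>" Arg] by simp
  have "\<forall>\<^sub>F t in at_top. 0 < Arg (Complex (P t / r t) (Q t / r t))"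
    using order_tendstoD(1)[OF Arg_lim, of 0] by simp
  then have "\<forall>\<^sub>F t in at_top. Arg (Complex (P t / r t) (Q t / r t)) = bearing xT yT (x t) (y t) (psi t)"
    using eventually_ge_at_top[of t1]
    by eventually_elim (simp add: bearing_eq_Arg r_pos_after Let_def)
  then show ?thesis
    using tendsto_cong Arg_lim by fastforce
qed

end

context uav_guidance
begin

lemma range_and_bearing_tendsto:
  "((\<lambda>t. uav_range xT yT (x t) (y t)) \<longlongrightarrow> rd) at_top
    \<and> ((\<lambda>t. bearing xT yT (x t) (y t) (psi t)) \<longlongrightarrow> pi / 2) at_top"
proof -
  obtain t1 where "0 < t1" "captured t1"
    using eventually_captured by blast
  then interpret uav_captured V rd k xT yT x y psi rdot t1
    using captured_forever by unfold_locales auto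
  show ?thesis
    using r_tendsto bearing_tendsto unfolding r_def[abs_def] by simp
qed

end

theorem theorem1:
  fixes V rd k xT yT :: real
    and x y psi rdot :: "real \<Rightarrow> real"
  assumes hV: "V > 0"
    and hrd: "rd > 0"
    and hk: "k > 1 / rd"
    and hrdot: "\<forall>t\<ge>0. uav_range xT yT (x t) (y t) > 0 \<longrightarrow>
        ((\<lambda>s. uav_range xT yT (x s) (y s)) has_real_derivative rdot t) (at t within {0..})"
    and hx: "\<forall>t\<ge>0. (x has_real_derivative V * cos (psi t)) (at t within {0..})"
    and hy: "\<forall>t\<ge>0. (y has_real_derivative V * sin (psi t)) (at t within {0..})"
    and hpsi: "\<forall>t\<ge>0. (psi has_real_derivative
        control V k rd (uav_range xT yT (x t) (y t)) (rdot t)) (at t within {0..})"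
  shows "((\<lambda>t. uav_range xT yT (x t) (y t)) \<longlongrightarrow> rd) at_top
       \<and> ((\<lambda>t. bearing xT yT (x t) (y t) (psi t)) \<longlongrightarrow> pi / 2) at_top"
proof -
  interpret uav_guidance V rd k xT yT x y psi rdot
    using assms by unfold_locales
  show ?thesis
    by (rule range_and_bearing_tendsto)
qed

end
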